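(* Let $n\geq 1$ be an integer. The cyclic subgroup commutativity degree of the dicyclic group $Dic_{4n}$ is $$csd(Dic_{4n})=\begin{cases}\dfrac{\tau(2n)(\tau(2n)+n)+n(\tau(2n)+1)}{(\tau(2n)+n)^2}, & \text{if } n\equiv 1 \pmod 2,\\[2ex] \dfrac{\tau(2n)(\tau(2n)+n)+n(\tau(2n)+2)}{(\tau(2n)+n)^2}, & \text{if } n\equiv 0 \pmod 2.\end{cases}$$
   Context: For a finite group $G$, $L_1(G)$ denotes the set of cyclic subgroups of $G$, and the cyclic subgroup commutativity degree is $csd(G)=\frac{1}{|L_1(G)|^2}|\{(H,K)\in L_1(G)^2: HK=KH\}|$. $\tau(k)$ is the number of positive divisors of $k$. The dicyclic group is $Dic_{4n}=\langle a,\gamma\mid a^{2n}=e,\ \gamma^2=a^n,\ \gamma^{-1}a\gamma=a^{-1}\rangle$. *)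

theory Defs
  imports "HOL-Algebra.Algebra"
begin

definition cyclic_subgroups :: "('a, 'b) monoid_scheme \<Rightarrow> 'a set set" where
  "cyclic_subgroups G = (\<lambda>x. generate G {x}) ` carrier G"

definition csd :: "('a, 'b) monoid_scheme \<Rightarrow> real" where
  "csd G = real (card {(H, K). H \<in> cyclic_subgroups G \<and> K \<in> cyclic_subgroups G \<and>
                         set_mult G H K = set_mult G K H})
           / real (card (cyclic_subgroups G)) ^ 2"

definition tau :: "nat \<Rightarrow> nat" where
  "tau k = card {d. d dvd k \<and> d > 0}"

text \<open>Dicyclic group Dic_{4n} = <a, g | a^{2n}=e, g^2=a^n, g^{-1} a g = a^{-1}>,
  realized concretely: the pair (i, b) stands for a^i g^b, with 0 \<le> i < 2n.
  Multiplication: a^i a^j g^t = a^{i+j} g^t;  a^i g a^j = a^{i-j} g;  a^i g a^j g = a^{i-j+n}.\<close>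
definition dic_mult :: "nat \<Rightarrow> int \<times> bool \<Rightarrow> int \<times> bool \<Rightarrow> int \<times> bool" where
  "dic_mult n x y = (case x of (i, s) \<Rightarrow> case y of (j, t) \<Rightarrow>
     if \<not> s then ((i + j) mod (2 * int n), t)
     else if \<not> t then ((i - j) mod (2 * int n), True)
     else ((i - j + int n) mod (2 * int n), False))"

definition Dic :: "nat \<Rightarrow> (int \<times> bool) monoid" where
  "Dic n = \<lparr> carrier = {0..<2 * int n} \<times> UNIV, monoid.mult = dic_mult n, one = (0, False) \<rparr>"

end

theory Submission
  imports Defs
begin

text \<open>Every cyclic subgroup of \<open>Dic\<^sub>4\<^sub>n\<close> is either \<open>\<langle>a\<^sup>d\<rangle>\<close> for a divisor \<open>d\<close> of \<open>2n\<close>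
  (there are \<open>\<tau>(2n)\<close> of these) or one of the \<open>n\<close> subgroups
  \<open>\<langle>a\<^sup>j\<gamma>\<rangle> = {1, a\<^sup>n, a\<^sup>j\<gamma>, a\<^sup>j\<^sup>+\<^sup>n\<gamma>}\<close> of order 4.
  The subgroups \<open>\<langle>a\<^sup>d\<rangle>\<close> are normal, so they permute with every subgroup, which accounts
  for \<open>\<tau>(2n)(\<tau>(2n) + n) + n \<tau>(2n)\<close> permuting pairs. Modulo \<open>\<langle>a\<^sup>n\<rangle>\<close> the product
  \<open>\<langle>a\<^sup>i\<gamma>\<rangle>\<langle>a\<^sup>j\<gamma>\<rangle>\<close> contains the rotations \<open>1\<close> and \<open>a\<^sup>i\<^sup>-\<^sup>j\<close>, so \<open>\<langle>a\<^sup>i\<gamma>\<rangle>\<close> and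
  \<open>\<langle>a\<^sup>j\<gamma>\<rangle>\<close> permute iff \<open>i - j \<equiv> j - i (mod n)\<close>, i.e. \<open>n\<close> divides \<open>2(i - j)\<close>;
  for fixed \<open>i\<close> this has one solution \<open>j\<close> if \<open>n\<close> is odd and two if \<open>n\<close> is even.\<close>

section \<open>Integer arithmetic\<close>

lemma mod_add_diff_mod_eq: "(c + a mod m - b) mod m = (c + a - b) mod (m::int)"
  by (metis add_diff_eq add.commute diff_add_eq mod_add_right_eq)

lemma diff_mod_double_eq: "0 \<le> j \<Longrightarrow> j < m \<Longrightarrow> (j - m) mod (2 * m) = j + (m::int)"
  by (smt (verit) mod_add_self2 mod_pos_pos_trivial)

lemma residue_class_mod_double:
  fixes m c :: int
  assumes "0 < m"
  shows "{y. 0 \<le> y \<and> y < 2 * m \<and> y mod m = c mod m} = {c mod (2 * m), (c + m) mod (2 * m)}"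
proof (intro equalityI subsetI)
  fix y assume "y \<in> {y. 0 \<le> y \<and> y < 2 * m \<and> y mod m = c mod m}"
  then have y: "0 \<le> y" "y < 2 * m" "m dvd y - c"
    by (auto simp: mod_eq_dvd_iff)
  then obtain k where k: "y - c = m * k"
    by (auto elim: dvdE)
  have "2 * m dvd y - c \<or> 2 * m dvd y - (c + m)"
  proof (cases "even k")
    case True
    then show ?thesis using k by (auto elim!: evenE)
  next
    case False
    then obtain l where "k = 2 * l + 1" by (auto elim!: oddE)
    then have "y - (c + m) = 2 * m * l" using k by (simp add: algebra_simps)
    then show ?thesis by simp
  qed
  then show "y \<in> {c mod (2 * m), (c + m) mod (2 * m)}"
    using y(1,2) by (auto simp: mod_eq_dvd_iff[symmetric])
next
  fix y assume "y \<in> {c mod (2 * m), (c + m) mod (2 * m)}"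
  then show "y \<in> {y. 0 \<le> y \<and> y < 2 * m \<and> y mod m = c mod m}"
    using assms by (auto simp: mod_mod_cancel)
qed

lemma card_residue_class:
  fixes m q i :: int
  assumes "0 < q" "q dvd m"
  shows "card {j \<in> {0..<m}. j mod q = i mod q} = nat (m div q)"
proof -
  have "{j \<in> {0..<m}. j mod q = i mod q} = (\<lambda>k. q * k + i mod q) ` {0..<m div q}"
  proof (intro equalityI subsetI)
    fix j assume "j \<in> {j \<in> {0..<m}. j mod q = i mod q}"
    then have j: "0 \<le> j" "j < m" "j mod q = i mod q" by auto
    have "q * (j div q) \<le> j"
      using mult_div_mod_eq[of q j] pos_mod_sign[OF assms(1), of j] by linarith
    then have "q * (j div q) < q * (m div q)"
      using j(2) assms(2) by simp
    then have "j div q < m div q"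
      using assms(1) by simp
    moreover have "j = q * (j div q) + i mod q"
      using j(3) by (metis mult_div_mod_eq)
    ultimately show "j \<in> (\<lambda>k. q * k + i mod q) ` {0..<m div q}"
      using j(1) assms(1) by (intro rev_image_eqI[of "j div q"]) (auto simp: pos_imp_zdiv_nonneg_iff)
  next
    fix j assume "j \<in> (\<lambda>k. q * k + i mod q) ` {0..<m div q}"
    then obtain k where k: "0 \<le> k" "k < m div q" "j = q * k + i mod q" by auto
    have "q * (k + 1) \<le> q * (m div q)"
      using k(2) assms(1) by (intro mult_left_mono) auto
    then have "q * k + q \<le> m"
      using assms(2) by (simp add: distrib_left)
    moreover have "0 \<le> q * k" "0 \<le> i mod q" "i mod q < q"
      using k(1) assms(1) by simp_all
    ultimately show "j \<in> {j \<in> {0..<m}. j mod q = i mod q}"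
      using k(3) by simp
  qed
  moreover have "inj_on (\<lambda>k. q * k + i mod q) {0..<m div q}"
    using assms(1) by (auto intro: inj_onI)
  ultimately show ?thesis by (simp add: card_image)
qed

lemma int_dvd_double_iff:
  "int n dvd 2 * x \<longleftrightarrow> (if odd n then int n else int n div 2) dvd x"
proof (cases "odd n")
  case True
  then have "coprime (int n) 2"
    by (simp add: coprime_commute)
  with True show ?thesis
    by (simp add: coprime_dvd_mult_right_iff)
next
  case False
  then obtain m where "int n = 2 * m"
    by (metis even_of_nat evenE)
  with False show ?thesis
    by simp
qed

lemma card_dvd_double_pairs:
  assumes "n \<ge> 1"
  shows "card {(i, j). i \<in> {0..<int n} \<and> j \<in> {0..<int n} \<and> int n dvd 2 * (i - j)} =
    (if odd n then n else 2 * n)"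
proof -
  define q where "q = (if odd n then int n else int n div 2)"
  have q: "0 < q" "q dvd int n"
    using assms by (auto simp: q_def elim!: evenE)
  have "int n dvd 2 * (i - j) \<longleftrightarrow> j mod q = i mod q" for i j
    unfolding int_dvd_double_iff q_def[symmetric] mod_eq_dvd_iff by (rule dvd_diff_commute)
  then have "{(i, j). i \<in> {0..<int n} \<and> j \<in> {0..<int n} \<and> int n dvd 2 * (i - j)} =
      Sigma {0..<int n} (\<lambda>i. {j \<in> {0..<int n}. j mod q = i mod q})"
    by auto
  also have "card \<dots> = (\<Sum>i\<in>{0..<int n}. card {j \<in> {0..<int n}. j mod q = i mod q})"
    by (rule card_SigmaI) (auto intro: finite_subset[of _ "{0..<int n}"])
  also have "\<dots> = n * nat (int n div q)"
    using card_residue_class[OF q] by simp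
  finally have "card {(i, j). i \<in> {0..<int n} \<and> j \<in> {0..<int n} \<and> int n dvd 2 * (i - j)} =
      n * nat (int n div q)" .
  moreover have "nat (int n div q) = (if odd n then 1 else 2)"
    using assms by (auto simp: q_def elim!: evenE)
  ultimately show ?thesis
    by simp
qed

lemma card_pos_int_divisors: "card {d :: int. 0 < d \<and> d dvd int k} = tau k"
proof -
  have "{d :: int. 0 < d \<and> d dvd int k} = int ` {d. d dvd k \<and> d > 0}"
  proof (intro equalityI subsetI)
    fix d :: int assume "d \<in> {d. 0 < d \<and> d dvd int k}"
    then have "d = int (nat d)" "nat d dvd k" "nat d > 0"
      by (auto simp flip: int_dvd_int_iff)
    then show "d \<in> int ` {d. d dvd k \<and> d > 0}"
      by blast
  qed auto
  then show ?thesis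
    by (simp add: tau_def card_image)
qed

lemma finite_pos_int_divisors: "k \<noteq> 0 \<Longrightarrow> finite {d :: int. 0 < d \<and> d dvd k}"
  by (rule finite_subset[of _ "{0..\<bar>k\<bar>}"]) (auto dest: dvd_imp_le_int)

section \<open>The dicyclic group\<close>

lemma dic_mult_simps [simp]:
  "dic_mult n (i, False) (j, t) = ((i + j) mod (2 * int n), t)"
  "dic_mult n (i, True) (j, False) = ((i - j) mod (2 * int n), True)"
  "dic_mult n (i, True) (j, True) = ((i - j + int n) mod (2 * int n), False)"
  by (simp_all add: dic_mult_def)

lemma Dic_simps [simp]:
  "carrier (Dic n) = {0..<2 * int n} \<times> UNIV"
  "x \<otimes>\<^bsub>Dic n\<^esub> y = dic_mult n x y"
  "\<one>\<^bsub>Dic n\<^esub> = (0, False)"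
  by (simp_all add: Dic_def)

lemma group_Dic:
  assumes "n \<ge> 1"
  shows "group (Dic n)"
proof (rule groupI)
  show "x \<otimes>\<^bsub>Dic n\<^esub> y \<in> carrier (Dic n)" for x y
    using assms by (auto simp: dic_mult_def split: prod.splits)
  show "x \<otimes>\<^bsub>Dic n\<^esub> y \<otimes>\<^bsub>Dic n\<^esub> z = x \<otimes>\<^bsub>Dic n\<^esub> (y \<otimes>\<^bsub>Dic n\<^esub> z)" for x y z
  proof -
    obtain i s j t k u where "x = (i, s)" "y = (j, t)" "z = (k, u)" by (metis prod.exhaust)
    then show ?thesis
      by (cases s; cases t; cases u)
        (simp_all add: mod_simps algebra_simps mod_add_diff_mod_eq, simp add: mod_eq_dvd_iff)
  qed
  show "\<exists>y\<in>carrier (Dic n). y \<otimes>\<^bsub>Dic n\<^esub> x = \<one>\<^bsub>Dic n\<^esub>"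
    if xc: "x \<in> carrier (Dic n)" for x
  proof -
    obtain i s where x: "x = (i, s)" "0 \<le> i" "i < 2 * int n" using xc by auto
    show ?thesis
    proof (cases s)
      case True
      show ?thesis
      proof (cases "i < int n")
        case True
        then show ?thesis by (intro bexI[of _ "(i + int n, True)"]) (use x in \<open>auto simp: \<open>s\<close>\<close>)
      next
        case False
        then show ?thesis by (intro bexI[of _ "(i - int n, True)"]) (use x in \<open>auto simp: \<open>s\<close>\<close>)
      qed
    next
      case False
      show ?thesis using assms
        by (intro bexI[of _ "((- i) mod (2 * int n), False)"]) (auto simp: x False mod_simps)
    qed
  qed
qed (use assms in auto)

section \<open>Cyclic subgroups\<close>

text \<open>Since \<open>(i, False)\<close> stands for \<open>a\<^sup>i\<close>, \<open>rot_subgroup n d = \<langle>a\<^sup>d\<rangle>\<close> for \<open>d\<close> dividing \<open>2n\<close>,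
  and \<open>gamma_subgroup n j = \<langle>a\<^sup>j\<gamma>\<rangle>\<close>.\<close>

definition rot_subgroup :: "nat \<Rightarrow> int \<Rightarrow> (int \<times> bool) set" where
  "rot_subgroup n d = {(i, False) | i. 0 \<le> i \<and> i < 2 * int n \<and> d dvd i}"

definition gamma_subgroup :: "nat \<Rightarrow> int \<Rightarrow> (int \<times> bool) set" where
  "gamma_subgroup n j = {(0, False), (int n, False), (j, True), (j + int n, True)}"

lemma inv_Dic_rotation:
  assumes "n \<ge> 1" "0 \<le> i" "i < 2 * int n"
  shows "inv\<^bsub>Dic n\<^esub> (i, False) = ((- i) mod (2 * int n), False)"
  using assms by (intro group.inv_equality[OF group_Dic[OF assms(1)]]) (auto simp: mod_simps)

lemma inv_Dic_gamma:
  assumes "n \<ge> 1" "0 \<le> j" "j < int n"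
  shows "inv\<^bsub>Dic n\<^esub> (j, True) = (j + int n, True)"
  using assms by (intro group.inv_equality[OF group_Dic[OF assms(1)]]) auto

lemma subgroup_rot_subgroup:
  assumes "n \<ge> 1" "d dvd 2 * int n"
  shows "subgroup (rot_subgroup n d) (Dic n)"
proof (rule group.subgroupI[OF group_Dic[OF assms(1)]])
  show "rot_subgroup n d \<noteq> {}"
    using assms(1) by (auto simp: rot_subgroup_def intro!: exI[of _ 0])
  show "inv\<^bsub>Dic n\<^esub> h \<in> rot_subgroup n d" if "h \<in> rot_subgroup n d" for h
    using that assms by (auto simp: rot_subgroup_def inv_Dic_rotation dvd_mod)
  show "h \<otimes>\<^bsub>Dic n\<^esub> k \<in> rot_subgroup n d"
    if "h \<in> rot_subgroup n d" "k \<in> rot_subgroup n d" for h k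
    using that assms by (auto simp: rot_subgroup_def dvd_mod)
qed (auto simp: rot_subgroup_def)

lemma subgroup_gamma_subgroup:
  assumes "n \<ge> 1" "0 \<le> j" "j < int n"
  shows "subgroup (gamma_subgroup n j) (Dic n)"
proof (rule group.subgroupI[OF group_Dic[OF assms(1)]])
  show "h \<otimes>\<^bsub>Dic n\<^esub> k \<in> gamma_subgroup n j"
    if "h \<in> gamma_subgroup n j" "k \<in> gamma_subgroup n j" for h k
    using that assms by (auto simp: gamma_subgroup_def diff_mod_double_eq)
  show "inv\<^bsub>Dic n\<^esub> h \<in> gamma_subgroup n j" if "h \<in> gamma_subgroup n j" for h
    using that assms inv_Dic_gamma[OF assms] group.inv_inv[OF group_Dic[OF assms(1)], of "(j, True)"]
    by (auto simp: gamma_subgroup_def inv_Dic_rotation diff_mod_double_eq[of 0 "int n", simplified])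
qed (use assms in \<open>auto simp: gamma_subgroup_def\<close>)

lemma Dic_rotation_pow: "(i, False) [^]\<^bsub>Dic n\<^esub> (m::nat) = ((int m * i) mod (2 * int n), False)"
  by (induction m) (simp_all add: mod_simps algebra_simps)

lemma generate_Dic_rotation:
  assumes "n \<ge> 1" "0 \<le> i" "i < 2 * int n"
  shows "generate (Dic n) {(i, False)} = rot_subgroup n (gcd i (2 * int n))"
proof
  interpret group "Dic n" by (rule group_Dic[OF assms(1)])
  show "generate (Dic n) {(i, False)} \<subseteq> rot_subgroup n (gcd i (2 * int n))"
    using assms by (intro generate_subgroup_incl subgroup_rot_subgroup) (auto simp: rot_subgroup_def)
  show "rot_subgroup n (gcd i (2 * int n)) \<subseteq> generate (Dic n) {(i, False)}"
  proof
    fix y assume "y \<in> rot_subgroup n (gcd i (2 * int n))"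
    then obtain k c where y: "y = (k, False)" "0 \<le> k" "k < 2 * int n" "k = gcd i (2 * int n) * c"
      by (auto simp: rot_subgroup_def elim!: dvdE)
    obtain u v where uv: "u * i + v * (2 * int n) = gcd i (2 * int n)"
      using bezout_int by blast
    define m where "m = nat ((c * u) mod (2 * int n))"
    have "k = c * (u * i + v * (2 * int n))"
      using y(4) uv by simp
    then have "k = (c * u * i + c * v * (2 * int n)) mod (2 * int n)"
      using y(2,3) by (simp add: algebra_simps)
    also have "\<dots> = (int m * i) mod (2 * int n)"
      using assms(1) by (simp add: m_def mod_simps)
    finally have "y = (i, False) [^]\<^bsub>Dic n\<^esub> m"
      by (simp add: y(1) Dic_rotation_pow)
    moreover have "(i, False) [^]\<^bsub>Dic n\<^esub> m \<in> generate (Dic n) {(i, False)}"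
      using subgroup_int_pow_closed[OF generate_is_subgroup generate.incl,
          of "{(i, False)}" "(i, False)" "int m"] assms
      by (simp add: int_pow_int)
    ultimately show "y \<in> generate (Dic n) {(i, False)}"
      by simp
  qed
qed

lemma generate_Dic_gamma:
  assumes "n \<ge> 1" "0 \<le> i" "i < 2 * int n"
  shows "generate (Dic n) {(i, True)} = gamma_subgroup n (i mod int n)"
proof
  interpret group "Dic n" by (rule group_Dic[OF assms(1)])
  let ?x = "(i, True)" and ?r = "i mod int n"
  have x2: "?x \<otimes>\<^bsub>Dic n\<^esub> ?x = (int n, False)"
    using assms by simp
  have odd_powers: "{?x, ?x \<otimes>\<^bsub>Dic n\<^esub> ?x \<otimes>\<^bsub>Dic n\<^esub> ?x} = {(?r, True), (?r + int n, True)}"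
  proof (cases "i < int n")
    case True
    then have "?r = i" "(int n + i) mod (2 * int n) = i + int n"
      using assms by simp_all
    then show ?thesis by (simp add: x2)
  next
    case False
    have "?r = (i - int n) mod int n"
      by simp
    also have "\<dots> = i - int n"
      using False assms by (intro mod_pos_pos_trivial) auto
    finally have "?r = i - int n" .
    moreover have "(int n + i) mod (2 * int n) = (i - int n) mod (2 * int n)"
      by (simp add: mod_eq_dvd_iff)
    moreover have "\<dots> = i - int n"
      using False assms by (intro mod_pos_pos_trivial) auto
    ultimately show ?thesis by (simp add: x2 insert_commute)
  qed
  have gamma_eq: "gamma_subgroup n ?r =
      {\<one>\<^bsub>Dic n\<^esub>, ?x \<otimes>\<^bsub>Dic n\<^esub> ?x, ?x, ?x \<otimes>\<^bsub>Dic n\<^esub> ?x \<otimes>\<^bsub>Dic n\<^esub> ?x}"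
    unfolding gamma_subgroup_def odd_powers[symmetric] by (simp only: x2 Dic_simps(3))
  show "generate (Dic n) {?x} \<subseteq> gamma_subgroup n ?r"
    using assms by (intro generate_subgroup_incl subgroup_gamma_subgroup) (auto simp: gamma_eq)
  show "gamma_subgroup n ?r \<subseteq> generate (Dic n) {?x}"
    unfolding gamma_eq by (auto intro: generate.intros simp del: Dic_simps)
qed

lemma cyclic_subgroups_Dic:
  assumes "n \<ge> 1"
  shows "cyclic_subgroups (Dic n) =
    rot_subgroup n ` {d. 0 < d \<and> d dvd 2 * int n} \<union> gamma_subgroup n ` {0..<int n}"
proof (rule equalityI)
  show "cyclic_subgroups (Dic n) \<subseteq>
      rot_subgroup n ` {d. 0 < d \<and> d dvd 2 * int n} \<union> gamma_subgroup n ` {0..<int n}"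
  proof
    fix H assume "H \<in> cyclic_subgroups (Dic n)"
    then obtain i s where i: "0 \<le> i" "i < 2 * int n" and H: "H = generate (Dic n) {(i, s)}"
      by (auto simp: cyclic_subgroups_def)
    show "H \<in> rot_subgroup n ` {d. 0 < d \<and> d dvd 2 * int n} \<union> gamma_subgroup n ` {0..<int n}"
    proof (cases s)
      case True
      then show ?thesis using assms i by (simp add: H generate_Dic_gamma)
    next
      case False
      then show ?thesis using assms i by (simp add: H generate_Dic_rotation)
    qed
  qed
  have "rot_subgroup n d \<in> cyclic_subgroups (Dic n)" if "0 < d" "d dvd 2 * int n" for d
  proof -
    have "gcd (d mod (2 * int n)) (2 * int n) = d"
      using that by (metis gcd.commute gcd_red_int gcd_proj1_if_dvd abs_of_pos normalize_int_def)
    then have "rot_subgroup n d = generate (Dic n) {(d mod (2 * int n), False)}"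
      using assms by (simp add: generate_Dic_rotation)
    then show ?thesis
      using assms unfolding cyclic_subgroups_def
      by (intro rev_image_eqI[of "(d mod (2 * int n), False)"]) auto
  qed
  moreover have "gamma_subgroup n j \<in> cyclic_subgroups (Dic n)" if "0 \<le> j" "j < int n" for j
    using that assms unfolding cyclic_subgroups_def
    by (intro rev_image_eqI[of "(j, True)"]) (auto simp: generate_Dic_gamma)
  ultimately show "rot_subgroup n ` {d. 0 < d \<and> d dvd 2 * int n} \<union> gamma_subgroup n ` {0..<int n}
      \<subseteq> cyclic_subgroups (Dic n)"
    by auto
qed

lemma inj_on_rot_subgroup:
  assumes "n \<ge> 1"
  shows "inj_on (rot_subgroup n) {d. 0 < d \<and> d dvd 2 * int n}"
proof -
  have mem_iff: "(e mod (2 * int n), False) \<in> rot_subgroup n e' \<longleftrightarrow> e' dvd e"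
    if "e' dvd 2 * int n" for e e'
  proof -
    have "0 \<le> e mod (2 * int n)" "e mod (2 * int n) < 2 * int n"
      using assms by simp_all
    then show ?thesis
      using dvd_mod_iff[OF that, of e] by (auto simp: rot_subgroup_def)
  qed
  have sub: "e' dvd e"
    if "e dvd 2 * int n" "e' dvd 2 * int n" "rot_subgroup n e = rot_subgroup n e'" for e e'
    using mem_iff[of e e] mem_iff[of e' e] that by simp
  show ?thesis
  proof (rule inj_onI)
    fix d d' assume "d \<in> {d. 0 < d \<and> d dvd 2 * int n}" "d' \<in> {d. 0 < d \<and> d dvd 2 * int n}"
      and "rot_subgroup n d = rot_subgroup n d'"
    then show "d = d'"
      using sub[of d d'] sub[of d' d] by (intro zdvd_antisym_nonneg) simp_all
  qed
qed

lemma inj_on_gamma_subgroup: "inj_on (gamma_subgroup n) {0..<int n}"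
proof (rule inj_onI)
  fix j j' assume "j \<in> {0..<int n}" "j' \<in> {0..<int n}" "gamma_subgroup n j = gamma_subgroup n j'"
  moreover have "(j, True) \<in> gamma_subgroup n j"
    by (simp add: gamma_subgroup_def)
  ultimately show "j = j'"
    by (auto simp: gamma_subgroup_def)
qed

lemma rot_gamma_subgroups_disjoint: "rot_subgroup n ` D \<inter> gamma_subgroup n ` J = {}"
proof -
  have "(j, True) \<in> gamma_subgroup n j" "(j, True) \<notin> rot_subgroup n d" for j d
    by (auto simp: gamma_subgroup_def rot_subgroup_def)
  then show ?thesis
    by blast
qed

lemma card_rot_subgroups:
  assumes "n \<ge> 1"
  shows "card (rot_subgroup n ` {d. 0 < d \<and> d dvd 2 * int n}) = tau (2 * n)"
  using card_pos_int_divisors[of "2 * n"] inj_on_rot_subgroup[OF assms] by (simp add: card_image)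

lemma card_gamma_subgroups: "card (gamma_subgroup n ` {0..<int n}) = n"
  using inj_on_gamma_subgroup by (simp add: card_image)

lemma finite_rot_subgroups: "n \<ge> 1 \<Longrightarrow> finite (rot_subgroup n ` {d. 0 < d \<and> d dvd 2 * int n})"
  using finite_pos_int_divisors[of "2 * int n"] by simp

lemma card_cyclic_subgroups_Dic:
  assumes "n \<ge> 1"
  shows "card (cyclic_subgroups (Dic n)) = tau (2 * n) + n"
  unfolding cyclic_subgroups_Dic[OF assms]
  using assms card_rot_subgroups card_gamma_subgroups finite_rot_subgroups
  by (simp add: card_Un_disjoint rot_gamma_subgroups_disjoint)

section \<open>Permuting pairs\<close>

lemma rot_mult_gamma:
  "(a, False) \<otimes>\<^bsub>Dic n\<^esub> (b, True) = (b, True) \<otimes>\<^bsub>Dic n\<^esub> ((- a) mod (2 * int n), False)"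
  by (simp add: mod_simps add.commute)

lemma normal_rot_subgroup:
  assumes "n \<ge> 1" "d dvd 2 * int n"
  shows "rot_subgroup n d \<lhd> Dic n"
proof (rule group.normalI[OF group_Dic[OF assms(1)] subgroup_rot_subgroup[OF assms]], intro ballI)
  let ?A = "rot_subgroup n d"
  fix x :: "int \<times> bool"
  obtain b s where x: "x = (b, s)"
    by fastforce
  have neg: "((- a) mod (2 * int n), False) \<in> ?A" if "(a, False) \<in> ?A" for a
    using that assms by (auto simp: rot_subgroup_def dvd_mod)
  show "?A #>\<^bsub>Dic n\<^esub> x = x <#\<^bsub>Dic n\<^esub> ?A"
  proof (cases s)
    case False
    then show ?thesis
      by (auto simp: x r_coset_def l_coset_def rot_subgroup_def add.commute)
  next
    case True
    then have xT: "x = (b, True)"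
      using x by simp
    have A_elem: "\<exists>a. h = (a, False)" if "h \<in> ?A" for h
      using that by (auto simp: rot_subgroup_def)
    show ?thesis
    proof (intro equalityI subsetI)
      fix y assume "y \<in> ?A #>\<^bsub>Dic n\<^esub> x"
      then obtain a where a: "(a, False) \<in> ?A" "y = (a, False) \<otimes>\<^bsub>Dic n\<^esub> x"
        unfolding r_coset_def using A_elem by blast
      then have "y = x \<otimes>\<^bsub>Dic n\<^esub> ((- a) mod (2 * int n), False)"
        unfolding xT rot_mult_gamma by simp
      then show "y \<in> x <#\<^bsub>Dic n\<^esub> ?A"
        using neg[OF a(1)] unfolding l_coset_def by blast
    next
      fix y assume "y \<in> x <#\<^bsub>Dic n\<^esub> ?A"
      then obtain a where a: "(a, False) \<in> ?A" "y = x \<otimes>\<^bsub>Dic n\<^esub> (a, False)"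
        unfolding l_coset_def using A_elem by blast
      have "(- ((- a) mod (2 * int n))) mod (2 * int n) = a"
        using a(1) by (auto simp: rot_subgroup_def mod_simps)
      then have "y = ((- a) mod (2 * int n), False) \<otimes>\<^bsub>Dic n\<^esub> x"
        unfolding a(2) xT rot_mult_gamma by simp
      then show "y \<in> ?A #>\<^bsub>Dic n\<^esub> x"
        using neg[OF a(1)] unfolding r_coset_def by blast
    qed
  qed
qed

lemma gamma_subgroup_set_mult:
  assumes "0 \<le> i" "i < int n" "0 \<le> j" "j < int n"
  shows "gamma_subgroup n i <#>\<^bsub>Dic n\<^esub> gamma_subgroup n j =
    (\<lambda>y. (y, False)) `
      {y. 0 \<le> y \<and> y < 2 * int n \<and> (y mod int n = 0 \<or> y mod int n = (i - j) mod int n)}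
    \<union> {(i, True), (i + int n, True), (j, True), (j + int n, True)}"
proof -
  have n: "0 < int n"
    using assms by simp
  have "{y. 0 \<le> y \<and> y < 2 * int n \<and> (y mod int n = 0 \<or> y mod int n = (i - j) mod int n)} =
      {y. 0 \<le> y \<and> y < 2 * int n \<and> y mod int n = 0 mod int n} \<union>
      {y. 0 \<le> y \<and> y < 2 * int n \<and> y mod int n = (i - j) mod int n}"
    (is "?R = _") by auto
  also have "\<dots> = {0, int n, (i - j) mod (2 * int n), (i - j + int n) mod (2 * int n)}"
    unfolding residue_class_mod_double[OF n] using n by (simp add: insert_commute)
  finally have "?R = {0, int n, (i - j) mod (2 * int n), (i - j + int n) mod (2 * int n)}" .
  moreover have "gamma_subgroup n i <#>\<^bsub>Dic n\<^esub> gamma_subgroup n j =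
    {(0, False), (int n, False), ((i - j) mod (2 * int n), False),
     ((i - j + int n) mod (2 * int n), False), (i, True), (i + int n, True), (j, True), (j + int n, True)}"
  proof -
    have "(int n + (j + int n)) mod (2 * int n) = j"
      using assms by (simp add: mod_pos_pos_trivial)
    moreover have "(i + int n - j + int n) mod (2 * int n) = (i - j) mod (2 * int n)"
      by (simp add: mod_eq_dvd_iff)
    ultimately show ?thesis
      using assms diff_mod_double_eq[of i "int n"]
      unfolding set_mult_def gamma_subgroup_def
      by (simp add: mod_pos_pos_trivial insert_commute) (auto simp: add.commute)
  qed
  ultimately show ?thesis
    by simp blast
qed

lemma gamma_subgroups_commute_iff:
  assumes "0 \<le> i" "i < int n" "0 \<le> j" "j < int n"
  shows "gamma_subgroup n i <#>\<^bsub>Dic n\<^esub> gamma_subgroup n j =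
      gamma_subgroup n j <#>\<^bsub>Dic n\<^esub> gamma_subgroup n i \<longleftrightarrow> int n dvd 2 * (i - j)"
proof -
  let ?F = "\<lambda>c. {y. 0 \<le> y \<and> y < 2 * int n \<and> (y mod int n = 0 \<or> y mod int n = c)}"
  have "gamma_subgroup n i <#>\<^bsub>Dic n\<^esub> gamma_subgroup n j =
      gamma_subgroup n j <#>\<^bsub>Dic n\<^esub> gamma_subgroup n i \<longleftrightarrow>
      ?F ((i - j) mod int n) = ?F ((j - i) mod int n)"
  proof -
    let ?T = "{(i, True), (i + int n, True), (j, True), (j + int n, True)}"
    have rotations: "{y. (y, False) \<in> (\<lambda>y. (y, False)) ` S \<union> ?T} = S" for S
      by auto
    have cancel: "(\<lambda>y. (y, False)) ` U \<union> ?T = (\<lambda>y. (y, False)) ` V \<union> ?T \<longleftrightarrow> U = V" for U V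
    proof
      assume "(\<lambda>y. (y, False)) ` U \<union> ?T = (\<lambda>y. (y, False)) ` V \<union> ?T"
      then have "{y. (y, False) \<in> (\<lambda>y. (y, False)) ` U \<union> ?T} =
          {y. (y, False) \<in> (\<lambda>y. (y, False)) ` V \<union> ?T}"
        by (rule arg_cong)
      then show "U = V"
        unfolding rotations .
    qed simp
    have T_sym: "{(j, True), (j + int n, True), (i, True), (i + int n, True)} = ?T"
      by auto
    show ?thesis
      unfolding gamma_subgroup_set_mult[OF assms] gamma_subgroup_set_mult[OF assms(3,4,1,2)] T_sym cancel
      by (rule refl)
  qed
  also have "\<dots> \<longleftrightarrow> (i - j) mod int n = (j - i) mod int n"
  proof
    assume F: "?F ((i - j) mod int n) = ?F ((j - i) mod int n)"
    have "0 \<le> (i - j) mod int n" "(i - j) mod int n < int n"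
      using assms by simp_all
    then have "(i - j) mod int n \<in> ?F ((i - j) mod int n)"
      by auto
    then have "(i - j) mod int n = 0 \<or> (i - j) mod int n = (j - i) mod int n"
      unfolding F by simp
    then show "(i - j) mod int n = (j - i) mod int n"
      by (auto simp: mod_eq_0_iff_dvd dvd_diff_commute)
  qed simp
  also have "\<dots> \<longleftrightarrow> int n dvd 2 * (i - j)"
    by (simp add: mod_eq_dvd_iff)
  finally show ?thesis .
qed

lemma subgroup_of_cyclic_subgroups: "group G \<Longrightarrow> H \<in> cyclic_subgroups G \<Longrightarrow> subgroup H G"
  by (auto simp: cyclic_subgroups_def intro: group.generate_is_subgroup)

lemma commuting_cyclic_subgroups_Dic:
  assumes "n \<ge> 1"
  defines "R \<equiv> rot_subgroup n ` {d. 0 < d \<and> d dvd 2 * int n}"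
    and "Q \<equiv> gamma_subgroup n ` {0..<int n}"
  shows "{(H, K). H \<in> cyclic_subgroups (Dic n) \<and> K \<in> cyclic_subgroups (Dic n) \<and>
      H <#>\<^bsub>Dic n\<^esub> K = K <#>\<^bsub>Dic n\<^esub> H} =
    R \<times> (R \<union> Q) \<union> Q \<times> R \<union> (\<lambda>(i, j). (gamma_subgroup n i, gamma_subgroup n j)) `
      {(i, j). i \<in> {0..<int n} \<and> j \<in> {0..<int n} \<and> int n dvd 2 * (i - j)}"
    (is "?C = ?P")
proof -
  have cyc: "cyclic_subgroups (Dic n) = R \<union> Q"
    unfolding R_def Q_def by (rule cyclic_subgroups_Dic[OF assms(1)])
  have rot_comm: "N <#>\<^bsub>Dic n\<^esub> K = K <#>\<^bsub>Dic n\<^esub> N" if "N \<in> R" "K \<in> R \<union> Q" for N K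
  proof -
    have "subgroup K (Dic n)"
      using that(2) group_Dic[OF assms(1)] by (simp add: cyc subgroup_of_cyclic_subgroups)
    moreover have "N \<lhd> Dic n"
      using that(1) assms(1) by (auto simp: R_def normal_rot_subgroup)
    ultimately show ?thesis
      by (metis group.commut_normal group_Dic[OF assms(1)])
  qed
  show "?C = ?P"
  proof (intro equalityI subsetI)
    fix x assume "x \<in> ?C"
    then obtain H K where x: "x = (H, K)" "H \<in> R \<union> Q" "K \<in> R \<union> Q"
      and comm: "H <#>\<^bsub>Dic n\<^esub> K = K <#>\<^bsub>Dic n\<^esub> H"
      by (auto simp: cyc)
    show "x \<in> ?P"
    proof (cases "H \<in> R \<or> K \<in> R")
      case True
      then show ?thesis using x by blast
    next
      case False
      then obtain i j where "H = gamma_subgroup n i" "K = gamma_subgroup n j"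
        "i \<in> {0..<int n}" "j \<in> {0..<int n}"
        using x by (auto simp: Q_def)
      then show ?thesis
        using comm gamma_subgroups_commute_iff[of i n j] x(1) by force
    qed
  next
    fix x assume "x \<in> ?P"
    then consider "x \<in> R \<times> (R \<union> Q)" | "x \<in> Q \<times> R"
      | i j where "x = (gamma_subgroup n i, gamma_subgroup n j)" "i \<in> {0..<int n}" "j \<in> {0..<int n}"
          "int n dvd 2 * (i - j)"
      by auto
    then show "x \<in> ?C"
    proof cases
      case 1
      then show ?thesis using rot_comm by (auto simp: cyc)
    next
      case 2
      then show ?thesis using rot_comm by (auto simp: cyc)
    next
      case 3
      then show ?thesis
        using gamma_subgroups_commute_iff[of i n j] by (auto simp: cyc Q_def)
    qed
  qed
qed

lemma card_commuting_cyclic_subgroups_Dic: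
  assumes "n \<ge> 1"
  shows "card {(H, K). H \<in> cyclic_subgroups (Dic n) \<and> K \<in> cyclic_subgroups (Dic n) \<and>
      H <#>\<^bsub>Dic n\<^esub> K = K <#>\<^bsub>Dic n\<^esub> H} =
    tau (2 * n) * (tau (2 * n) + n) + n * tau (2 * n) + (if odd n then n else 2 * n)"
proof -
  define R where "R = rot_subgroup n ` {d. 0 < d \<and> d dvd 2 * int n}"
  define Q where "Q = gamma_subgroup n ` {0..<int n}"
  define P where "P = {(i, j). i \<in> {0..<int n} \<and> j \<in> {0..<int n} \<and> int n dvd 2 * (i - j)}"
  define g where "g = (\<lambda>(i, j). (gamma_subgroup n i, gamma_subgroup n j))"
  have R: "finite R" "card R = tau (2 * n)"
    using assms by (simp_all add: R_def finite_rot_subgroups card_rot_subgroups)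
  have Q: "finite Q" "card Q = n"
    by (simp_all add: Q_def card_gamma_subgroups)
  have RQ: "R \<inter> Q = {}"
    by (simp add: R_def Q_def rot_gamma_subgroups_disjoint)
  have "inj_on g P"
    using inj_on_gamma_subgroup by (auto simp: g_def P_def inj_on_def)
  then have gP: "card (g ` P) = (if odd n then n else 2 * n)"
    using card_dvd_double_pairs[OF assms] by (simp add: card_image P_def)
  have "g ` P \<subseteq> Q \<times> Q"
    by (auto simp: g_def P_def Q_def)
  then have "(R \<times> (R \<union> Q) \<union> Q \<times> R) \<inter> g ` P = {}"
    using RQ by blast
  moreover have "(R \<times> (R \<union> Q)) \<inter> (Q \<times> R) = {}"
    using RQ by blast
  moreover have "finite (g ` P)"
    by (rule finite_subset[OF \<open>g ` P \<subseteq> Q \<times> Q\<close>]) (simp add: Q)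
  moreover have "{(H, K). H \<in> cyclic_subgroups (Dic n) \<and> K \<in> cyclic_subgroups (Dic n) \<and>
      H <#>\<^bsub>Dic n\<^esub> K = K <#>\<^bsub>Dic n\<^esub> H} = R \<times> (R \<union> Q) \<union> Q \<times> R \<union> g ` P"
    unfolding R_def Q_def P_def g_def by (rule commuting_cyclic_subgroups_Dic[OF assms])
  ultimately show ?thesis
    using R Q RQ gP by (simp add: card_Un_disjoint card_cartesian_product)
qed

theorem theorem3p1:
  fixes n :: nat
  assumes "n \<ge> 1"
  shows "csd (Dic n) =
    (if odd n
     then (real (tau (2*n)) * (real (tau (2*n)) + real n) + real n * (real (tau (2*n)) + 1))
            / (real (tau (2*n)) + real n) ^ 2
     else (real (tau (2*n)) * (real (tau (2*n)) + real n) + real n * (real (tau (2*n)) + 2))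
            / (real (tau (2*n)) + real n) ^ 2)"
  unfolding csd_def card_commuting_cyclic_subgroups_Dic[OF assms] card_cyclic_subgroups_Dic[OF assms]
  by (simp add: algebra_simps)

end
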